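(* Let $M$ be a graded $R$-module. Then for every graded quasi-primary submodule $Q$ of $M$ satisfying the graded primeful property, $qp\text{-}V_M^g(Q)$ is an irreducible closed subset of $qp.Spec_g(M)$ with the quasi-Zariski topology.
   Context: $R=\bigoplus_{g\in G}R_g$ is a graded commutative ring with identity graded by a group $G$, $h(R)=\bigcup_g R_g$; $M$ is a graded $R$-module, $h(M)$ its homogeneous elements. $Gr(I)$ is the graded radical of a graded ideal $I$. $(K:_RM)=\{r: rM\subseteq K\}$. Graded prime submodule: proper graded $P$ with $rm\in P$ ($r\in h(R), m\in h(M)$) implying $m\in P$ or $r\in(P:_RM)$. $Gr_M(K)$: intersection of graded prime submodules containing $K$ ($M$ if none). Graded primeful property of $K$: for each graded prime $p\supseteq(K:_RM)$ there is a graded prime submodule $P\supseteq K$ with $(P:_RM)=p$. Graded quasi-primary submodule: proper graded $Q$ with $rm\in Q$ ($r\in h(R),m\in h(M)$) implying $r\in Gr((Q:_RM))$ or $m\in Gr_M(Q)$. $qp.Spec_g(M)$: graded quasi-primary submodules with the graded primeful property. $qp\text{-}V_M^g(K)=\{Q\in qp.Spec_g(M): Gr((Q:_RM))\supseteq Gr((K:_RM))\}$; the quasi-Zariski topology has closed sets exactly these. A subset $A$ of a topological space is irreducible if whenever $A\subseteq A_1\cup A_2$ with $A_1,A_2$ closed, then $A\subseteq A_1$ or $A\subseteq A_2$. *)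

theory Defs
  imports Main
begin

definition is_decomp :: "('g \<Rightarrow> 'a::comm_monoid_add set) \<Rightarrow> 'a \<Rightarrow> ('g \<Rightarrow> 'a) \<Rightarrow> bool" where
  "is_decomp A x c \<longleftrightarrow> finite {g. c g \<noteq> 0} \<and> (\<forall>g. c g \<in> A g) \<and> x = sum c {g. c g \<noteq> 0}"

definition direct_sum_decomp :: "('g \<Rightarrow> 'a::comm_monoid_add set) \<Rightarrow> bool" where
  "direct_sum_decomp A \<longleftrightarrow> (\<forall>x. \<exists>!c. is_decomp A x c)"

definition comp :: "('g \<Rightarrow> 'a::comm_monoid_add set) \<Rightarrow> 'a \<Rightarrow> 'g \<Rightarrow> 'a" where
  "comp A x = (THE c. is_decomp A x c)"

definition homog :: "('g \<Rightarrow> 'a set) \<Rightarrow> 'a set" where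
  "homog A = \<Union> (range A)"

definition add_subgroups :: "('g \<Rightarrow> 'a::ab_group_add set) \<Rightarrow> bool" where
  "add_subgroups A \<longleftrightarrow> (\<forall>g. 0 \<in> A g \<and> (\<forall>a\<in>A g. \<forall>b\<in>A g. a + b \<in> A g \<and> - a \<in> A g))"

definition graded_ring :: "('g::group_add \<Rightarrow> 'r::comm_ring_1 set) \<Rightarrow> bool" where
  "graded_ring Rg \<longleftrightarrow> add_subgroups Rg
     \<and> (\<forall>g h. \<forall>a\<in>Rg g. \<forall>b\<in>Rg h. a * b \<in> Rg (g + h))
     \<and> direct_sum_decomp Rg"

definition module_ax :: "('r::comm_ring_1 \<Rightarrow> 'm::ab_group_add \<Rightarrow> 'm) \<Rightarrow> bool" where
  "module_ax sm \<longleftrightarrow> (\<forall>a x y. sm a (x + y) = sm a x + sm a y)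
     \<and> (\<forall>a b x. sm (a + b) x = sm a x + sm b x)
     \<and> (\<forall>a b x. sm (a * b) x = sm a (sm b x))
     \<and> (\<forall>x. sm 1 x = x)"

text \<open>M (the whole type 'm) is a graded R-module, with scalar multiplication sm.\<close>
definition graded_module :: "('g::group_add \<Rightarrow> 'r::comm_ring_1 set) \<Rightarrow> ('r \<Rightarrow> 'm::ab_group_add \<Rightarrow> 'm)
    \<Rightarrow> ('g \<Rightarrow> 'm set) \<Rightarrow> bool" where
  "graded_module Rg sm Mg \<longleftrightarrow> graded_ring Rg \<and> module_ax sm \<and> add_subgroups Mg
     \<and> (\<forall>g h. \<forall>a\<in>Rg g. \<forall>m\<in>Mg h. sm a m \<in> Mg (g + h))
     \<and> direct_sum_decomp Mg"

definition submodule :: "('r::comm_ring_1 \<Rightarrow> 'm::ab_group_add \<Rightarrow> 'm) \<Rightarrow> 'm set \<Rightarrow> bool" where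
  "submodule sm N \<longleftrightarrow> 0 \<in> N \<and> (\<forall>x\<in>N. \<forall>y\<in>N. x + y \<in> N) \<and> (\<forall>r. \<forall>x\<in>N. sm r x \<in> N)"

definition graded_submodule :: "('g \<Rightarrow> 'm::ab_group_add set) \<Rightarrow> ('r::comm_ring_1 \<Rightarrow> 'm \<Rightarrow> 'm)
    \<Rightarrow> 'm set \<Rightarrow> bool" where
  "graded_submodule Mg sm N \<longleftrightarrow> submodule sm N \<and> (\<forall>x\<in>N. \<forall>g. comp Mg x g \<in> N)"

definition ideal_of :: "'r::comm_ring_1 set \<Rightarrow> bool" where
  "ideal_of I \<longleftrightarrow> 0 \<in> I \<and> (\<forall>x\<in>I. \<forall>y\<in>I. x + y \<in> I) \<and> (\<forall>r. \<forall>x\<in>I. r * x \<in> I)"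

definition graded_ideal :: "('g \<Rightarrow> 'r::comm_ring_1 set) \<Rightarrow> 'r set \<Rightarrow> bool" where
  "graded_ideal Rg I \<longleftrightarrow> ideal_of I \<and> (\<forall>x\<in>I. \<forall>g. comp Rg x g \<in> I)"

definition graded_prime_ideal :: "('g \<Rightarrow> 'r::comm_ring_1 set) \<Rightarrow> 'r set \<Rightarrow> bool" where
  "graded_prime_ideal Rg p \<longleftrightarrow> graded_ideal Rg p \<and> p \<noteq> UNIV
     \<and> (\<forall>a\<in>homog Rg. \<forall>b\<in>homog Rg. a * b \<in> p \<longrightarrow> a \<in> p \<or> b \<in> p)"

definition graded_radical :: "('g \<Rightarrow> 'r::comm_ring_1 set) \<Rightarrow> 'r set \<Rightarrow> 'r set" where
  "graded_radical Rg I = {x. \<forall>g. \<exists>n>0. (comp Rg x g) ^ n \<in> I}"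

definition colon :: "('r \<Rightarrow> 'm \<Rightarrow> 'm) \<Rightarrow> 'm set \<Rightarrow> 'r set" where
  "colon sm K = {r. \<forall>m. sm r m \<in> K}"

definition graded_prime_submodule :: "('g \<Rightarrow> 'r::comm_ring_1 set) \<Rightarrow> ('r \<Rightarrow> 'm::ab_group_add \<Rightarrow> 'm)
    \<Rightarrow> ('g \<Rightarrow> 'm set) \<Rightarrow> 'm set \<Rightarrow> bool" where
  "graded_prime_submodule Rg sm Mg P \<longleftrightarrow> graded_submodule Mg sm P \<and> P \<noteq> UNIV
     \<and> (\<forall>r\<in>homog Rg. \<forall>m\<in>homog Mg. sm r m \<in> P \<longrightarrow> m \<in> P \<or> r \<in> colon sm P)"

text \<open>Gr_M(K): intersection of graded prime submodules containing K (UNIV if there are none).\<close>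
definition gr_M :: "('g \<Rightarrow> 'r::comm_ring_1 set) \<Rightarrow> ('r \<Rightarrow> 'm::ab_group_add \<Rightarrow> 'm)
    \<Rightarrow> ('g \<Rightarrow> 'm set) \<Rightarrow> 'm set \<Rightarrow> 'm set" where
  "gr_M Rg sm Mg K = \<Inter> {P. graded_prime_submodule Rg sm Mg P \<and> K \<subseteq> P}"

definition graded_primeful :: "('g \<Rightarrow> 'r::comm_ring_1 set) \<Rightarrow> ('r \<Rightarrow> 'm::ab_group_add \<Rightarrow> 'm)
    \<Rightarrow> ('g \<Rightarrow> 'm set) \<Rightarrow> 'm set \<Rightarrow> bool" where
  "graded_primeful Rg sm Mg K \<longleftrightarrow> (\<forall>p. graded_prime_ideal Rg p \<and> colon sm K \<subseteq> p \<longrightarrow>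
      (\<exists>P. graded_prime_submodule Rg sm Mg P \<and> K \<subseteq> P \<and> colon sm P = p))"

definition graded_quasi_primary :: "('g \<Rightarrow> 'r::comm_ring_1 set) \<Rightarrow> ('r \<Rightarrow> 'm::ab_group_add \<Rightarrow> 'm)
    \<Rightarrow> ('g \<Rightarrow> 'm set) \<Rightarrow> 'm set \<Rightarrow> bool" where
  "graded_quasi_primary Rg sm Mg Q \<longleftrightarrow> graded_submodule Mg sm Q \<and> Q \<noteq> UNIV
     \<and> (\<forall>r\<in>homog Rg. \<forall>m\<in>homog Mg. sm r m \<in> Q \<longrightarrow>
          r \<in> graded_radical Rg (colon sm Q) \<or> m \<in> gr_M Rg sm Mg Q)"

definition qp_spec :: "('g \<Rightarrow> 'r::comm_ring_1 set) \<Rightarrow> ('r \<Rightarrow> 'm::ab_group_add \<Rightarrow> 'm)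
    \<Rightarrow> ('g \<Rightarrow> 'm set) \<Rightarrow> 'm set set" where
  "qp_spec Rg sm Mg = {Q. graded_quasi_primary Rg sm Mg Q \<and> graded_primeful Rg sm Mg Q}"

definition qp_V :: "('g \<Rightarrow> 'r::comm_ring_1 set) \<Rightarrow> ('r \<Rightarrow> 'm::ab_group_add \<Rightarrow> 'm)
    \<Rightarrow> ('g \<Rightarrow> 'm set) \<Rightarrow> 'm set \<Rightarrow> 'm set set" where
  "qp_V Rg sm Mg K = {Q \<in> qp_spec Rg sm Mg.
      graded_radical Rg (colon sm K) \<subseteq> graded_radical Rg (colon sm Q)}"

definition qz_closed :: "('g \<Rightarrow> 'r::comm_ring_1 set) \<Rightarrow> ('r \<Rightarrow> 'm::ab_group_add \<Rightarrow> 'm)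
    \<Rightarrow> ('g \<Rightarrow> 'm set) \<Rightarrow> 'm set set \<Rightarrow> bool" where
  "qz_closed Rg sm Mg A \<longleftrightarrow> (\<exists>K. graded_submodule Mg sm K \<and> A = qp_V Rg sm Mg K)"

definition irreducible_wrt :: "('a set \<Rightarrow> bool) \<Rightarrow> 'a set \<Rightarrow> bool" where
  "irreducible_wrt closedP A \<longleftrightarrow> (\<forall>A1 A2. closedP A1 \<and> closedP A2 \<and> A \<subseteq> A1 \<union> A2 \<longrightarrow> A \<subseteq> A1 \<or> A \<subseteq> A2)"

end

theory Submission
  imports Defs
begin

text \<open>\<open>Q\<close> is a generic point of \<open>qp-V(Q)\<close>: it lies in \<open>qp-V(Q)\<close>, and any closed set
  \<open>qp-V(K)\<close> containing \<open>Q\<close> contains all of \<open>qp-V(Q)\<close>, because membership only compares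
  graded radicals of colon ideals and that comparison is transitive. A set with a
  generic point is irreducible.\<close>

lemma irreducible_wrt_if_generic_point:
  assumes "x \<in> A"
    and "\<And>C. closedP C \<Longrightarrow> x \<in> C \<Longrightarrow> A \<subseteq> C"
  shows "irreducible_wrt closedP A"
  using assms unfolding irreducible_wrt_def by blast

lemma qz_closed_qp_V:
  assumes "graded_submodule Mg sm K"
  shows "qz_closed Rg sm Mg (qp_V Rg sm Mg K)"
  using assms unfolding qz_closed_def by blast

lemma qp_V_self:
  assumes "Q \<in> qp_spec Rg sm Mg"
  shows "Q \<in> qp_V Rg sm Mg Q"
  using assms unfolding qp_V_def by blast

lemma qp_V_subset_if_mem:
  assumes "Q \<in> qp_V Rg sm Mg K"
  shows "qp_V Rg sm Mg Q \<subseteq> qp_V Rg sm Mg K"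
  using assms unfolding qp_V_def by blast

lemma qz_closed_subset_if_mem:
  assumes "qz_closed Rg sm Mg C" and "Q \<in> C"
  shows "qp_V Rg sm Mg Q \<subseteq> C"
  using assms qp_V_subset_if_mem unfolding qz_closed_def by blast

theorem theorem4p6:
  fixes Rg :: "'g::group_add \<Rightarrow> 'r::comm_ring_1 set"
    and sm :: "'r \<Rightarrow> 'm::ab_group_add \<Rightarrow> 'm"
    and Mg :: "'g \<Rightarrow> 'm set"
    and Q :: "'m set"
  assumes "graded_module Rg sm Mg"
    and "graded_quasi_primary Rg sm Mg Q"
    and "graded_primeful Rg sm Mg Q"
  shows "qz_closed Rg sm Mg (qp_V Rg sm Mg Q)
    \<and> irreducible_wrt (qz_closed Rg sm Mg) (qp_V Rg sm Mg Q)"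
proof
  have "graded_submodule Mg sm Q"
    using assms(2) unfolding graded_quasi_primary_def by blast
  then show "qz_closed Rg sm Mg (qp_V Rg sm Mg Q)"
    by (rule qz_closed_qp_V)
  have "Q \<in> qp_spec Rg sm Mg"
    using assms(2,3) unfolding qp_spec_def by blast
  then show "irreducible_wrt (qz_closed Rg sm Mg) (qp_V Rg sm Mg Q)"
    by (rule irreducible_wrt_if_generic_point[OF qp_V_self qz_closed_subset_if_mem])
qed

end
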